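(* Let $c=0.3$, $a=\sqrt{1+c^2}$, $$\gamma_{AB}=\begin{pmatrix}a&0&c&0\\0&a&0&-c\\c&0&a&0\\0&-c&0&a\end{pmatrix},\qquad \gamma=\gamma_{AB}\oplus\mathbb{1}_2,$$ $\tilde p_1=(0,1,0,1,1,2)^T$, $\tilde p_2=(1,0,-1,0,0,1)^T$, and for $a_1,a_2\ge0$ let $\gamma_{a_1,a_2}=\gamma+a_1\tilde p_1\tilde p_1^T+a_2\tilde p_2\tilde p_2^T$. Then for no $a_1,a_2\ge0$ is $\gamma_{a_1,a_2}$ fully separable; in particular, every $\gamma_{a_1,a_2}$ that satisfies $\gamma_{a_1,a_2}\ge i\tilde J_x$ for all $x\in\{0,A,B,C\}$ is a PPT entangled (Class 4) CM.
   Context: Conventions: Three modes $A,B,C$, phase-space vectors ordered mode-wise as $(q_A,p_A,q_B,p_B,q_C,p_C)$. $J_1=\begin{pmatrix}0&-1\\1&0\end{pmatrix}$, $J=J_1\oplus J_1\oplus J_1$. A CM of $n$ modes is a real symmetric $2n\times2n$ matrix $\gamma>0$ with $\gamma-iJ\ge0$; $X\ge Y$ means $X-Y$ is positive semidefinite. For $x\in\{A,B,C\}$, $\tilde J_x$ is $J$ with the $2\times2$ diagonal block of mode $x$ replaced by $-J_1$, and $\tilde J_0=J$. A three-mode CM is fully separable if there exist one-mode CMs $\gamma_A,\gamma_B,\gamma_C$ with $\gamma\ge\gamma_A\oplus\gamma_B\oplus\gamma_C$; it is separable with respect to the bipartition $x$–$yz$ if there exist a one-mode CM $\gamma_x$ and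 a two-mode CM $\gamma_{yz}$ with $\gamma\ge\gamma_x\oplus\gamma_{yz}$; Class 4 means separable with respect to all three bipartitions but not fully separable. *)

theory Defs
  imports Complex_Main
begin

text \<open>Matrices are represented as functions on indices; an n x n matrix only uses
  entries with indices in {0..<n}. Phase-space ordering is mode-wise
  (q_A,p_A,q_B,p_B,q_C,p_C), indices 0..5; mode m occupies indices 2m, 2m+1.\<close>

type_synonym rmat = "nat \<Rightarrow> nat \<Rightarrow> real"
type_synonym cmat = "nat \<Rightarrow> nat \<Rightarrow> complex"

definition rsym :: "nat \<Rightarrow> rmat \<Rightarrow> bool" where
  "rsym n M \<longleftrightarrow> (\<forall>i<n. \<forall>j<n. M i j = M j i)"

definition psd_r :: "nat \<Rightarrow> rmat \<Rightarrow> bool" where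
  "psd_r n M \<longleftrightarrow> (\<forall>v :: nat \<Rightarrow> real. 0 \<le> (\<Sum>i<n. \<Sum>j<n. v i * M i j * v j))"

definition pd_r :: "nat \<Rightarrow> rmat \<Rightarrow> bool" where
  "pd_r n M \<longleftrightarrow> (\<forall>v :: nat \<Rightarrow> real. (\<exists>i<n. v i \<noteq> 0) \<longrightarrow>
      0 < (\<Sum>i<n. \<Sum>j<n. v i * M i j * v j))"

definition psd_c :: "nat \<Rightarrow> cmat \<Rightarrow> bool" where
  "psd_c n M \<longleftrightarrow> (\<forall>v :: nat \<Rightarrow> complex.
      Im (\<Sum>i<n. \<Sum>j<n. cnj (v i) * M i j * v j) = 0 \<and>
      0 \<le> Re (\<Sum>i<n. \<Sum>j<n. cnj (v i) * M i j * v j))"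

definition J1 :: rmat where
  "J1 i j = (if i = 0 \<and> j = 1 then -1 else if i = 1 \<and> j = 0 then 1 else 0)"

definition Jsym :: rmat where
  "Jsym i j = (if i div 2 = j div 2 then J1 (i mod 2) (j mod 2) else 0)"

text \<open>\<tilde>J_x for mode x (0 = A, 1 = B, 2 = C): block of mode x replaced by -J_1.\<close>
definition Jtilde :: "nat \<Rightarrow> rmat" where
  "Jtilde x i j = (if i div 2 = x \<and> j div 2 = x then - Jsym i j else Jsym i j)"

definition ge_iK :: "nat \<Rightarrow> rmat \<Rightarrow> rmat \<Rightarrow> bool" where
  "ge_iK n X K \<longleftrightarrow> psd_c n (\<lambda>i j. complex_of_real (X i j) - \<i> * complex_of_real (K i j))"

definition CM :: "nat \<Rightarrow> rmat \<Rightarrow> bool" where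
  "CM n g \<longleftrightarrow> rsym (2*n) g \<and> pd_r (2*n) g \<and> ge_iK (2*n) g Jsym"

definition fully_sep :: "rmat \<Rightarrow> bool" where
  "fully_sep g \<longleftrightarrow> (\<exists>gs :: nat \<Rightarrow> rmat. (\<forall>m<3. CM 1 (gs m)) \<and>
     psd_r 6 (\<lambda>i j. g i j - (if i div 2 = j div 2 then gs (i div 2) (i mod 2) (j mod 2) else 0)))"

text \<open>Index of a phase-space coordinate i (of a mode different from x) inside the
  two-mode system of the remaining modes y < z.\<close>
definition rest_idx :: "nat \<Rightarrow> nat \<Rightarrow> nat" where
  "rest_idx x i = 2 * (if i div 2 < x then i div 2 else i div 2 - 1) + i mod 2"

text \<open>\<gamma>_x \<oplus> \<gamma>_yz embedded in the mode-wise ordering (A,B,C).\<close>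
definition embed_bip :: "nat \<Rightarrow> rmat \<Rightarrow> rmat \<Rightarrow> rmat" where
  "embed_bip x g1 g2 i j =
     (if i div 2 = x \<and> j div 2 = x then g1 (i mod 2) (j mod 2)
      else if i div 2 \<noteq> x \<and> j div 2 \<noteq> x then g2 (rest_idx x i) (rest_idx x j)
      else 0)"

definition bisep :: "nat \<Rightarrow> rmat \<Rightarrow> bool" where
  "bisep x g \<longleftrightarrow> (\<exists>g1 g2. CM 1 g1 \<and> CM 2 g2 \<and>
     psd_r 6 (\<lambda>i j. g i j - embed_bip x g1 g2 i j))"

definition class4 :: "rmat \<Rightarrow> bool" where
  "class4 g \<longleftrightarrow> CM 3 g \<and> (\<forall>x<3. bisep x g) \<and> \<not> fully_sep g"

definition cc :: real where "cc = 3/10"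
definition aa :: real where "aa = sqrt (1 + cc^2)"

definition gam0 :: rmat where
  "gam0 i j =
     (if i = j then (if i < 4 then aa else if i < 6 then 1 else 0)
      else if (i = 0 \<and> j = 2) \<or> (i = 2 \<and> j = 0) then cc
      else if (i = 1 \<and> j = 3) \<or> (i = 3 \<and> j = 1) then - cc
      else 0)"

definition pt1 :: "real list" where "pt1 = [0, 1, 0, 1, 1, 2]"
definition pt2 :: "real list" where "pt2 = [1, 0, -1, 0, 0, 1]"

definition gam :: "real \<Rightarrow> real \<Rightarrow> rmat" where
  "gam a1 a2 i j = gam0 i j + a1 * (pt1 ! i) * (pt1 ! j) + a2 * (pt2 ! i) * (pt2 ! j)"

end

theory Submission
  imports Defs
begin

text \<open>
  Write \<open>\<kappa> = a1 a2 / (a1 a2 + a2 + 5 a1)\<close>. Full separability fails for all \<open>a1, a2\<close>: four test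
  vectors orthogonal to \<open>pt1\<close> and \<open>pt2\<close> turn \<open>gam \<ge> g\<^sub>A \<oplus> g\<^sub>B \<oplus> g\<^sub>C\<close> into an upper bound on
  \<open>\<Sum>\<^sub>m tr (P\<^sub>m g\<^sub>m)\<close> below the lower bound \<open>\<Sum>\<^sub>m 2 \<surd>det P\<^sub>m\<close> that holds for all one-mode CMs.

  In the Hermitian forms of \<open>gam - i J\<^sub>A\<close> (partial transpose on A) and of
  \<open>gam - g \<oplus> 0 - i (0 \<oplus> J)\<close>, the parameters enter through one term which, minimised over
  mode C, equals \<open>\<kappa> |l|\<^sup>2\<close> for a fixed linear form \<open>l\<close>. Hence the PPT condition across A forces
  \<open>\<kappa> \<ge> \<kappa>\<^sub>A \<approx> 0.09\<close>. Conversely, for such \<open>\<kappa>\<close> explicit one-mode CMs \<open>YA\<close>, \<open>YB\<close> satisfy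
  \<open>gam - Y \<oplus> 0 \<ge> i (0 \<oplus> J)\<close> by a sum-of-squares certificate, and the Schur complement of that
  mode's block in \<open>gam - Y \<oplus> 0\<close> is a two-mode CM completing a separable decomposition across
  A | BC, resp. B | AC. Across C | AB, \<open>gam \<ge> 1 \<oplus> \<gamma>\<^sub>A\<^sub>B\<close> holds outright.
\<close>

section \<open>Bilinear and Hermitian forms\<close>

definition bform :: "nat \<Rightarrow> rmat \<Rightarrow> (nat \<Rightarrow> real) \<Rightarrow> (nat \<Rightarrow> real) \<Rightarrow> real" where
  "bform n M x y = (\<Sum>i<n. \<Sum>j<n. x i * M i j * y j)"

lemma sum_lessThan_2: "(\<Sum>i<(2::nat). f i) = f 0 + f 1"
  and sum_lessThan_4: "(\<Sum>i<(4::nat). f i) = f 0 + f 1 + f 2 + f 3"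
  and sum_lessThan_6: "(\<Sum>i<(6::nat). f i) = f 0 + f 1 + f 2 + f 3 + f 4 + f 5"
  by (simp_all add: eval_nat_numeral)

lemma psd_r_iff_bform: "psd_r n M \<longleftrightarrow> (\<forall>v. 0 \<le> bform n M v v)"
  unfolding psd_r_def bform_def by simp

lemma pd_r_iff_bform: "pd_r n M \<longleftrightarrow> (\<forall>v. (\<exists>i<n. v i \<noteq> 0) \<longrightarrow> 0 < bform n M v v)"
  unfolding pd_r_def bform_def by simp

lemma bform_cong:
  assumes "\<And>i. i < n \<Longrightarrow> x i = x' i" "\<And>i. i < n \<Longrightarrow> y i = y' i"
  shows "bform n M x y = bform n M x' y'"
  unfolding bform_def using assms by (intro sum.cong refl) auto

lemma bform_diff: "bform n (\<lambda>i j. A i j - B i j) x y = bform n A x y - bform n B x y"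
  unfolding bform_def by (simp add: algebra_simps sum_subtractf)

lemma bform_scale_left: "bform n M (\<lambda>i. s * x i) y = s * bform n M x y"
  and bform_scale_right: "bform n M x (\<lambda>i. t * y i) = t * bform n M x y"
  unfolding bform_def by (simp_all add: sum_distrib_left algebra_simps)

lemma bform_zero [simp]: "bform n M (\<lambda>i. 0) y = 0" "bform n M x (\<lambda>i. 0) = 0"
  unfolding bform_def by simp_all

lemma bform_swap:
  assumes "\<And>i j. i < n \<Longrightarrow> j < n \<Longrightarrow> M j i = c * M i j"
  shows "bform n M y x = c * bform n M x y"
proof -
  have "bform n M y x = (\<Sum>i<n. \<Sum>j<n. y j * M j i * x i)" unfolding bform_def by (rule sum.swap)
  also have "\<dots> = (\<Sum>i<n. \<Sum>j<n. c * (x i * M i j * y j))"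
    unfolding bform_def
    apply (intro sum.cong refl)
    subgoal for i j using assms[of i j] by (simp add: mult_ac)
    done
  finally show ?thesis by (simp add: bform_def sum_distrib_left)
qed

text \<open>The real part of \<open>v\<^sup>* (G - i K) v\<close> at \<open>v = X + i Y\<close>.\<close>
definition herm_form :: "nat \<Rightarrow> rmat \<Rightarrow> rmat \<Rightarrow> (nat \<Rightarrow> real) \<Rightarrow> (nat \<Rightarrow> real) \<Rightarrow> real" where
  "herm_form n G K X Y = bform n G X X + bform n G Y Y + bform n K X Y - bform n K Y X"

lemma herm_form_cong:
  assumes "\<And>i. i < n \<Longrightarrow> X i = X' i" "\<And>i. i < n \<Longrightarrow> Y i = Y' i"
  shows "herm_form n G K X Y = herm_form n G K X' Y'"
  unfolding herm_form_def bform_def using assms by simp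

lemma Re_Im_cnj_mult_herm:
  "Re (cnj u * (complex_of_real g - \<i> * complex_of_real k) * w)
     = Re u * g * Re w + Im u * g * Im w + Re u * k * Im w - Im u * k * Re w"
  "Im (cnj u * (complex_of_real g - \<i> * complex_of_real k) * w)
     = Re u * g * Im w - Im u * g * Re w - Re u * k * Re w - Im u * k * Im w"
  by (simp_all add: algebra_simps)

lemma Re_herm_sum:
  "Re (\<Sum>i<n. \<Sum>j<n. cnj (v i) * (complex_of_real (G i j) - \<i> * complex_of_real (K i j)) * v j)
     = herm_form n G K (\<lambda>i. Re (v i)) (\<lambda>i. Im (v i))"
  unfolding herm_form_def bform_def
  by (simp only: Re_sum Re_Im_cnj_mult_herm) (simp add: sum.distrib sum_subtractf)

lemma Im_herm_sum:
  "Im (\<Sum>i<n. \<Sum>j<n. cnj (v i) * (complex_of_real (G i j) - \<i> * complex_of_real (K i j)) * v j)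
     = (bform n G (\<lambda>i. Re (v i)) (\<lambda>i. Im (v i)) - bform n G (\<lambda>i. Im (v i)) (\<lambda>i. Re (v i)))
       - (bform n K (\<lambda>i. Re (v i)) (\<lambda>i. Re (v i)) + bform n K (\<lambda>i. Im (v i)) (\<lambda>i. Im (v i)))"
  unfolding bform_def
  by (simp only: Im_sum Re_Im_cnj_mult_herm) (simp add: sum.distrib sum_subtractf)

lemma ge_iK_imp_herm_form_nonneg:
  assumes "ge_iK n G K"
  shows "0 \<le> herm_form n G K X Y"
proof -
  let ?v = "\<lambda>i. Complex (X i) (Y i)"
  have "0 \<le> Re (\<Sum>i<n. \<Sum>j<n. cnj (?v i) * (complex_of_real (G i j) - \<i> * complex_of_real (K i j)) * ?v j)"
    using assms unfolding ge_iK_def psd_c_def by (elim allE[of _ ?v]) blast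
  then show ?thesis unfolding Re_herm_sum by simp
qed

lemma ge_iK_intro:
  assumes sym: "\<And>i j. i < n \<Longrightarrow> j < n \<Longrightarrow> G j i = G i j"
    and antisym: "\<And>i j. i < n \<Longrightarrow> j < n \<Longrightarrow> K j i = - K i j"
    and nonneg: "\<And>X Y. 0 \<le> herm_form n G K X Y"
  shows "ge_iK n G K"
proof -
  have "bform n G y x = 1 * bform n G x y" for x y
    by (rule bform_swap) (metis sym mult_1)
  moreover have "bform n K x x = -1 * bform n K x x" for x
    by (rule bform_swap) (metis antisym mult_minus1)
  ultimately show ?thesis
    using nonneg unfolding ge_iK_def psd_c_def Re_herm_sum Im_herm_sum by simp
qed

lemma Jsym_antisym: "Jsym j i = - Jsym i j"
  unfolding Jsym_def J1_def by auto

lemma pos_if_quadratic_nonneg: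
  fixes A B N :: real
  assumes H: "\<And>t. 0 \<le> A + t * t * B - 2 * t * N" and N: "N > 0"
  shows "A > 0"
proof (cases "B \<le> 0")
  case True
  then show ?thesis using H[of 1] N by simp
next
  case False
  have "0 \<le> A + (N/B) * (N/B) * B - 2 * (N/B) * N" by (rule H)
  also have "\<dots> = A - N * N / B" using False by (simp add: field_simps)
  finally show ?thesis using N False by (smt (verit) divide_pos_pos mult_pos_pos)
qed

definition J_apply :: "(nat \<Rightarrow> real) \<Rightarrow> nat \<Rightarrow> real" where
  "J_apply v j = (if even j then - v (j + 1) else v (j - 1))"

lemma Jsym_J_apply:
  assumes "i < 2 * m"
  shows "(\<Sum>j<2*m. Jsym i j * J_apply v j) = - v i"
proof -
  define p where "p = (if even i then i + 1 else i - 1)"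
  have p: "p < 2 * m" using assms unfolding p_def by (auto elim!: evenE oddE)
  have "Jsym i j = 0" if "j \<noteq> p" for j
  proof -
    have "\<not> (i div 2 = j div 2 \<and> i mod 2 \<noteq> j mod 2)"
      using that unfolding p_def by (cases "even i") (auto elim!: evenE oddE, presburger+)
    then show ?thesis unfolding Jsym_def J1_def by auto
  qed
  then have "(\<Sum>j<2*m. Jsym i j * J_apply v j)
      = (\<Sum>j<2*m. if j = p then Jsym i p * J_apply v p else 0)"
    by (intro sum.cong) auto
  also have "\<dots> = Jsym i p * J_apply v p"
    using p by simp
  also have "\<dots> = - v i"
  proof (cases "even i")
    case True
    then have "odd p" "p - 1 = i" "p div 2 = i div 2" "i mod 2 = 0" "p mod 2 = 1"
      unfolding p_def by auto
    then show ?thesis unfolding Jsym_def J1_def J_apply_def by simp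
  next
    case False
    then have "even p" "p + 1 = i" "p div 2 = i div 2" "i mod 2 = 1" "p mod 2 = 0"
      unfolding p_def by (auto elim!: oddE)
    then show ?thesis unfolding Jsym_def J1_def J_apply_def by simp
  qed
  finally show ?thesis .
qed

text \<open>Test \<open>G \<ge> i J\<close> on \<open>v + i t J v\<close> and let \<open>t\<close> vary.\<close>
lemma ge_iK_Jsym_imp_pd_r:
  assumes G: "ge_iK (2 * m) G Jsym"
  shows "pd_r (2 * m) G"
  unfolding pd_r_iff_bform
proof (intro allI impI)
  fix v :: "nat \<Rightarrow> real"
  assume "\<exists>i<2*m. v i \<noteq> 0"
  then obtain i0 where i0: "i0 < 2 * m" "v i0 \<noteq> 0" by blast
  define w where "w = J_apply v"
  define s where "s = (\<Sum>i<2*m. v i * v i)"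
  have s: "s > 0"
    unfolding s_def using i0 by (intro sum_pos2[of _ i0]) (auto simp: zero_less_mult_iff linorder_neq_iff)
  have "bform (2*m) Jsym v w = (\<Sum>i<2*m. v i * (\<Sum>j<2*m. Jsym i j * w j))"
    unfolding bform_def by (simp add: sum_distrib_left mult.assoc)
  also have "\<dots> = (\<Sum>i<2*m. v i * - v i)"
    unfolding w_def by (intro sum.cong refl) (simp add: Jsym_J_apply)
  finally have Jvw: "bform (2*m) Jsym v w = - s"
    unfolding s_def by (simp add: sum_negf)
  have "bform (2*m) Jsym w v = -1 * bform (2*m) Jsym v w"
    by (rule bform_swap) (metis Jsym_antisym mult_minus1)
  then have Jwv: "bform (2*m) Jsym w v = s" using Jvw by simp
  have "0 \<le> bform (2*m) G v v + t * t * bform (2*m) G w w - 2 * t * s" for t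
  proof -
    have "0 \<le> herm_form (2*m) G Jsym v (\<lambda>i. t * w i)" by (rule ge_iK_imp_herm_form_nonneg[OF G])
    then show ?thesis
      unfolding herm_form_def bform_scale_left bform_scale_right Jvw Jwv by (simp add: algebra_simps)
  qed
  then show "0 < bform (2*m) G v v" using pos_if_quadratic_nonneg s by blast
qed

section \<open>Two-by-two blocks\<close>

text \<open>The Hermitian form of \<open>[[h00, p + i q], [p - i q, h11]]\<close> at \<open>(w0r + i w0i, w1r + i w1i)\<close>.\<close>
definition herm2_form :: "real \<Rightarrow> real \<Rightarrow> real \<Rightarrow> real \<Rightarrow> real \<Rightarrow> real \<Rightarrow> real \<Rightarrow> real \<Rightarrow> real" where
  "herm2_form h00 h11 p q w0r w0i w1r w1i = h00 * (w0r\<^sup>2 + w0i\<^sup>2) + h11 * (w1r\<^sup>2 + w1i\<^sup>2)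
     + 2 * (p * (w0r * w1r + w0i * w1i) - q * (w0r * w1i - w0i * w1r))"

lemma herm2_form_nonneg:
  assumes "h00 > 0" "h00 * h11 - p\<^sup>2 - q\<^sup>2 \<ge> 0"
  shows "herm2_form h00 h11 p q w0r w0i w1r w1i \<ge> 0"
proof -
  have "h00 * herm2_form h00 h11 p q w0r w0i w1r w1i
      = (h00 * w0r + p * w1r - q * w1i)\<^sup>2 + (h00 * w0i + p * w1i + q * w1r)\<^sup>2
        + (h00 * h11 - p\<^sup>2 - q\<^sup>2) * (w1r\<^sup>2 + w1i\<^sup>2)"
    unfolding herm2_form_def by algebra
  also have "\<dots> \<ge> 0" using assms(2) by simp
  finally show ?thesis using assms(1) by (simp add: zero_le_mult_iff)
qed

lemma CM_1_intro:
  assumes sym: "g 1 0 = g 0 1" and pos: "g 0 0 > 0" and det: "g 0 0 * g 1 1 - (g 0 1)\<^sup>2 \<ge> 1"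
  shows "CM 1 g"
proof -
  have sym2: "g j i = g i j" if "i < 2" "j < 2" for i j
    using sym that by (auto simp: less_2_cases_iff)
  have herm: "herm_form 2 g Jsym X Y = herm2_form (g 0 0) (g 1 1) (g 0 1) 1 (X 0) (Y 0) (X 1) (Y 1)" for X Y
    unfolding herm_form_def bform_def sum_lessThan_2 herm2_form_def Jsym_def J1_def
    using sym by (simp add: power2_eq_square algebra_simps)
  have ge: "ge_iK 2 g Jsym"
  proof (rule ge_iK_intro)
    show "g j i = g i j" if "i < 2" "j < 2" for i j using sym2 that .
    show "Jsym j i = - Jsym i j" for i j by (rule Jsym_antisym)
    show "0 \<le> herm_form 2 g Jsym X Y" for X Y
      unfolding herm using pos det by (intro herm2_form_nonneg) auto
  qed
  then have "pd_r 2 g" using ge_iK_Jsym_imp_pd_r[of 1] by simp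
  then show ?thesis unfolding CM_def rsym_def using sym2 ge by auto
qed

text \<open>Test \<open>g \<ge> i J\<close> on \<open>(p, q + i d)\<close>.\<close>
lemma CM_1_trace_ge:
  assumes g: "CM 1 g" and p: "p > 0" and d: "d\<^sup>2 \<le> p * r - q\<^sup>2"
  shows "p * g 0 0 + 2 * q * g 0 1 + r * g 1 1 \<ge> 2 * d"
proof -
  have sym: "g 1 0 = g 0 1" using g unfolding CM_def rsym_def by auto
  define e :: "nat \<Rightarrow> real" where "e i = (if i = 0 then 0 else 1)" for i
  have "\<exists>i<2. e i \<noteq> 0" by (rule exI[of _ 1]) (simp add: e_def)
  then have "0 < bform 2 g e e" using g unfolding CM_def pd_r_iff_bform by simp
  then have g11: "g 1 1 \<ge> 0" unfolding bform_def sum_lessThan_2 e_def by simp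
  have "0 \<le> herm_form 2 g Jsym (\<lambda>i. if i = 0 then p else q) (\<lambda>i. if i = 0 then 0 else d)"
    using g unfolding CM_def by (intro ge_iK_imp_herm_form_nonneg) simp
  then have "0 \<le> g 0 0 * p\<^sup>2 + 2 * g 0 1 * p * q + g 1 1 * (q\<^sup>2 + d\<^sup>2) - 2 * p * d"
    unfolding herm_form_def bform_def sum_lessThan_2 Jsym_def J1_def
    using sym by (simp add: power2_eq_square algebra_simps)
  moreover have "g 1 1 * d\<^sup>2 \<le> g 1 1 * (p * r - q\<^sup>2)" using d g11 by (rule mult_left_mono)
  ultimately have "0 \<le> p * (p * g 0 0 + 2 * q * g 0 1 + r * g 1 1 - 2 * d)"
    by (simp add: power2_eq_square algebra_simps)
  then show ?thesis using p by (simp add: zero_le_mult_iff)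
qed

text \<open>The bilinear form of \<open>P\<^sup>-\<^sup>1\<close> for \<open>P = [[p00, p01], [p01, p11]]\<close>.\<close>
definition inv2_form :: "real \<Rightarrow> real \<Rightarrow> real \<Rightarrow> real \<Rightarrow> real \<Rightarrow> real \<Rightarrow> real \<Rightarrow> real" where
  "inv2_form p00 p01 p11 b0 b1 c0 c1 =
     (b0 * (p11 * c0 - p01 * c1) + b1 * (p00 * c1 - p01 * c0)) / (p00 * p11 - p01\<^sup>2)"

lemma bform_inv2_form:
  "bform n (\<lambda>p q. inv2_form a b c (f p) (g p) (f q) (g q)) w w'
   = inv2_form a b c (\<Sum>p<n. w p * f p) (\<Sum>p<n. w p * g p) (\<Sum>q<n. w' q * f q) (\<Sum>q<n. w' q * g q)"
proof -
  let ?F = "\<Sum>p<n. w p * f p" and ?G = "\<Sum>p<n. w p * g p"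
  let ?F' = "\<Sum>q<n. w' q * f q" and ?G' = "\<Sum>q<n. w' q * g q"
  have "?F * (c * ?F' - b * ?G') + ?G * (a * ?G' - b * ?F')
      = c * (?F * ?F') - b * (?F * ?G') + a * (?G * ?G') - b * (?G * ?F')"
    by (simp add: algebra_simps)
  also have "\<dots> = (\<Sum>p<n. \<Sum>q<n. w p * (f p * (c * f q - b * g q) + g p * (a * g q - b * f q)) * w' q)"
    unfolding sum_product by (simp add: sum_distrib_left sum.distrib sum_subtractf algebra_simps)
  finally show ?thesis
    unfolding bform_def inv2_form_def by (simp add: sum_divide_distrib)
qed

lemma quadratic2_ge_min:
  assumes p00: "p00 > 0" and det: "p00 * p11 - p01\<^sup>2 > 0"
  shows "0 \<le> p00 * z0\<^sup>2 + 2 * p01 * z0 * z1 + p11 * z1\<^sup>2 + 2 * (z0 * b0 + z1 * b1)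
            + inv2_form p00 p01 p11 b0 b1 b0 b1"
proof -
  define d where "d = p00 * p11 - p01\<^sup>2"
  define Q where "Q = p00 * z0\<^sup>2 + 2 * p01 * z0 * z1 + p11 * z1\<^sup>2 + 2 * (z0 * b0 + z1 * b1)"
  define R where "R = b0 * (p11 * b0 - p01 * b1) + b1 * (p00 * b1 - p01 * b0)"
  have d: "d > 0" using det unfolding d_def .
  have "p00 * d * (d * Q + R)
        = (p00 * (d * z0 + p11 * b0 - p01 * b1) + p01 * (d * z1 + p00 * b1 - p01 * b0))\<^sup>2
          + d * (d * z1 + p00 * b1 - p01 * b0)\<^sup>2"
    unfolding Q_def R_def d_def by algebra
  also have "\<dots> \<ge> 0" using d by simp
  finally have "0 \<le> d * Q + R"
    using mult_le_cancel_left_pos[of "p00 * d" 0 "d * Q + R"] p00 d by simp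
  then have "0 \<le> Q + R / d" using d by (simp add: field_simps)
  then show ?thesis unfolding inv2_form_def Q_def R_def d_def .
qed

lemma quadratic2_at_min:
  assumes d: "d = p00 * p11 - p01\<^sup>2" "d \<noteq> 0"
    and z: "d * z0 = p01 * b1 - p11 * b0" "d * z1 = p01 * b0 - p00 * b1"
  shows "p00 * z0\<^sup>2 + 2 * p01 * z0 * z1 + p11 * z1\<^sup>2 + 2 * (z0 * b0 + z1 * b1)
         = - inv2_form p00 p01 p11 b0 b1 b0 b1"
proof -
  have "d * (p00 * z0 + p01 * z1 + b0) = 0" "d * (p01 * z0 + p11 * z1 + b1) = 0"
    using d(1) z by algebra+
  then have lin: "p00 * z0 + p01 * z1 + b0 = 0" "p01 * z0 + p11 * z1 + b1 = 0"
    using d(2) by simp_all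
  have "d * - inv2_form p00 p01 p11 b0 b1 b0 b1 = - (b0 * (p11 * b0 - p01 * b1) + b1 * (p00 * b1 - p01 * b0))"
    unfolding inv2_form_def d(1)[symmetric] using d(2) by simp
  also have "\<dots> = d * (z0 * b0 + z1 * b1)"
    using z by algebra
  finally have "- inv2_form p00 p01 p11 b0 b1 b0 b1 = z0 * b0 + z1 * b1"
    by (simp only: mult_left_cancel[OF d(2)])
  with lin show ?thesis by algebra
qed

section \<open>Splitting off one mode\<close>

definition rest_pos :: "nat \<Rightarrow> nat \<Rightarrow> nat" where
  "rest_pos x p = (if p div 2 < x then p else p + 2)"

lemma rest_idx_rest_pos [simp]: "rest_idx x (rest_pos x p) = p"
  unfolding rest_idx_def rest_pos_def by auto

lemma rest_pos_not_mode [simp]: "rest_pos x p div 2 \<noteq> x"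
  unfolding rest_pos_def by auto

lemma rest_pos_lt: "x < 3 \<Longrightarrow> p < 4 \<Longrightarrow> rest_pos x p < 6"
  unfolding rest_pos_def by auto

lemma rest_pos_rest_idx:
  assumes "x < 3" "i < 6" "i div 2 \<noteq> x"
  shows "rest_pos x (rest_idx x i) = i"
proof -
  have "x \<in> {0, 1, 2}" "i \<in> {0, 1, 2, 3, 4, 5}" using assms(1,2) by auto
  then show ?thesis using assms(3) unfolding rest_pos_def rest_idx_def by auto
qed

lemma sum_lessThan_6_split:
  assumes "x < 3"
  shows "(\<Sum>i<6. f i) = (\<Sum>k<2. f (2 * x + k)) + (\<Sum>p<4. f (rest_pos x p))"
proof -
  have "x = 0 \<or> x = 1 \<or> x = 2" using assms by auto
  then show ?thesis
    by (elim disjE) (simp_all add: sum_lessThan_2 sum_lessThan_4 sum_lessThan_6 rest_pos_def ac_simps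
        numeral_2_eq_2[symmetric] numeral_3_eq_3[symmetric])
qed

definition split_vec :: "nat \<Rightarrow> (nat \<Rightarrow> real) \<Rightarrow> (nat \<Rightarrow> real) \<Rightarrow> nat \<Rightarrow> real" where
  "split_vec x z w i = (if i div 2 = x then z (i mod 2) else w (rest_idx x i))"

lemma split_vec_mode [simp]: "k < 2 \<Longrightarrow> split_vec x z w (2 * x + k) = z k"
  and split_vec_rest [simp]: "split_vec x z w (rest_pos x p) = w p"
  unfolding split_vec_def by auto

lemma split_vec_restrict:
  assumes "x < 3" "i < 6"
  shows "split_vec x (\<lambda>k. v (2 * x + k)) (\<lambda>p. v (rest_pos x p)) i = v i"
proof (cases "i div 2 = x")
  case True
  then have "i = 2 * x + i mod 2" by presburger
  then show ?thesis using True unfolding split_vec_def by simp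
qed (use assms rest_pos_rest_idx in \<open>auto simp: split_vec_def\<close>)

definition coupling :: "nat \<Rightarrow> rmat \<Rightarrow> (nat \<Rightarrow> real) \<Rightarrow> nat \<Rightarrow> real" where
  "coupling x N w k = (\<Sum>p<4. w p * N (rest_pos x p) (2 * x + k))"

lemma bform_split_vec:
  assumes x: "x < 3" and sym: "rsym 6 N"
  shows "bform 6 N (split_vec x z w) (split_vec x z' w') =
      bform 2 (\<lambda>k l. N (2 * x + k) (2 * x + l)) z z'
      + (\<Sum>k<2. z k * coupling x N w' k) + (\<Sum>k<2. z' k * coupling x N w k)
      + bform 4 (\<lambda>p q. N (rest_pos x p) (rest_pos x q)) w w'"
proof -
  have symN: "N (2 * x + k) (rest_pos x p) = N (rest_pos x p) (2 * x + k)" if "k < 2" "p < 4" for k p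
    using sym rest_pos_lt[OF x that(2)] that x unfolding rsym_def by auto
  have "bform 6 N (split_vec x z w) (split_vec x z' w') =
      bform 2 (\<lambda>k l. N (2 * x + k) (2 * x + l)) z z'
      + (\<Sum>k<2. \<Sum>q<4. z k * N (2 * x + k) (rest_pos x q) * w' q)
      + (\<Sum>p<4. \<Sum>l<2. w p * N (rest_pos x p) (2 * x + l) * z' l)
      + bform 4 (\<lambda>p q. N (rest_pos x p) (rest_pos x q)) w w'"
    unfolding bform_def sum_lessThan_6_split[OF x] by (simp add: sum.distrib)
  also have "(\<Sum>k<2. \<Sum>q<4. z k * N (2 * x + k) (rest_pos x q) * w' q) = (\<Sum>k<2. z k * coupling x N w' k)"
    unfolding coupling_def by (intro sum.cong refl) (simp add: sum_distrib_left symN, simp add: mult_ac)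
  also have "(\<Sum>p<4. \<Sum>l<2. w p * N (rest_pos x p) (2 * x + l) * z' l) = (\<Sum>k<2. z' k * coupling x N w k)"
    unfolding coupling_def by (subst sum.swap) (simp add: sum_distrib_left mult_ac)
  finally show ?thesis .
qed

lemma bform_embed_bip_rest:
  assumes "x < 3"
  shows "bform 6 (embed_bip x (\<lambda>_ _. 0) g) (split_vec x z w) (split_vec x z' w') = bform 4 g w w'"
  unfolding bform_def sum_lessThan_6_split[OF assms] by (simp add: embed_bip_def)

definition mode_det :: "nat \<Rightarrow> rmat \<Rightarrow> real" where
  "mode_det x N = N (2 * x) (2 * x) * N (2 * x + 1) (2 * x + 1) - (N (2 * x) (2 * x + 1))\<^sup>2"

text \<open>Indexed by the coordinates of the two modes other than \<open>x\<close>.\<close>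
definition schur_compl :: "nat \<Rightarrow> rmat \<Rightarrow> rmat" where
  "schur_compl x N p q = N (rest_pos x p) (rest_pos x q)
     - inv2_form (N (2 * x) (2 * x)) (N (2 * x) (2 * x + 1)) (N (2 * x + 1) (2 * x + 1))
         (N (rest_pos x p) (2 * x)) (N (rest_pos x p) (2 * x + 1))
         (N (rest_pos x q) (2 * x)) (N (rest_pos x q) (2 * x + 1))"

lemma schur_compl_sym:
  assumes "x < 3" "rsym 6 N" "p < 4" "q < 4"
  shows "schur_compl x N q p = schur_compl x N p q"
  using assms rest_pos_lt[of x p] rest_pos_lt[of x q]
  unfolding schur_compl_def inv2_form_def rsym_def by (simp add: algebra_simps)

lemma bform_schur_compl:
  "bform 4 (schur_compl x N) w w' = bform 4 (\<lambda>p q. N (rest_pos x p) (rest_pos x q)) w w'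
     - inv2_form (N (2 * x) (2 * x)) (N (2 * x) (2 * x + 1)) (N (2 * x + 1) (2 * x + 1))
         (coupling x N w 0) (coupling x N w 1) (coupling x N w' 0) (coupling x N w' 1)"
  unfolding schur_compl_def bform_diff bform_inv2_form coupling_def by simp

lemma bform_split_vec_diag:
  assumes x: "x < 3" and sym: "rsym 6 N"
  shows "bform 6 N (split_vec x z w) (split_vec x z w) =
      N (2 * x) (2 * x) * (z 0)\<^sup>2 + 2 * N (2 * x) (2 * x + 1) * z 0 * z 1 + N (2 * x + 1) (2 * x + 1) * (z 1)\<^sup>2
      + 2 * (z 0 * coupling x N w 0 + z 1 * coupling x N w 1)
      + bform 4 (\<lambda>p q. N (rest_pos x p) (rest_pos x q)) w w"
proof -
  have "N (2 * x + 1) (2 * x) = N (2 * x) (2 * x + 1)"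
    using sym x unfolding rsym_def by simp
  then show ?thesis
    unfolding bform_split_vec[OF x sym] by (simp add: bform_def sum_lessThan_2 power2_eq_square algebra_simps)
qed

lemma bform_split_vec_ge_schur_compl:
  assumes x: "x < 3" and sym: "rsym 6 N"
    and pos: "N (2 * x) (2 * x) > 0" "mode_det x N > 0"
  shows "bform 4 (schur_compl x N) w w \<le> bform 6 N (split_vec x z w) (split_vec x z w)"
  using quadratic2_ge_min[OF pos[unfolded mode_det_def], of "z 0" "z 1" "coupling x N w 0" "coupling x N w 1"]
  unfolding bform_split_vec_diag[OF x sym] bform_schur_compl by simp

lemma schur_compl_attained:
  assumes x: "x < 3" and sym: "rsym 6 N" and det: "mode_det x N \<noteq> 0"
  obtains z where "bform 6 N (split_vec x z w) (split_vec x z w) = bform 4 (schur_compl x N) w w"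
proof
  let ?d = "mode_det x N"
  let ?b = "coupling x N w"
  define z :: "nat \<Rightarrow> real" where "z k = (if k = 0 then N (2 * x) (2 * x + 1) * ?b 1 - N (2 * x + 1) (2 * x + 1) * ?b 0
    else N (2 * x) (2 * x + 1) * ?b 0 - N (2 * x) (2 * x) * ?b 1) / ?d" for k
  have "?d * z 0 = N (2 * x) (2 * x + 1) * ?b 1 - N (2 * x + 1) (2 * x + 1) * ?b 0"
    "?d * z 1 = N (2 * x) (2 * x + 1) * ?b 0 - N (2 * x) (2 * x) * ?b 1"
    using det unfolding z_def by simp_all
  from quadratic2_at_min[OF mode_det_def det this]
  show "bform 6 N (split_vec x z w) (split_vec x z w) = bform 4 (schur_compl x N) w w"
    unfolding bform_split_vec_diag[OF x sym] bform_schur_compl by simp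
qed

text \<open>An isotropic direction \<open>z\<close> of the block of mode \<open>x\<close> would make the form negative at
  \<open>(z, - t c)\<close> for small \<open>t > 0\<close>, where \<open>c \<noteq> 0\<close> is the image of \<open>z\<close> under the coupling block.\<close>
lemma mode_block_pos:
  assumes x: "x < 3" and sym: "rsym 6 N" and psd: "psd_r 6 N"
    and inj: "\<And>z0 z1. z0 \<noteq> 0 \<or> z1 \<noteq> 0 \<Longrightarrow>
      \<exists>p<4. N (rest_pos x p) (2 * x) * z0 + N (rest_pos x p) (2 * x + 1) * z1 \<noteq> 0"
  shows "N (2 * x) (2 * x) > 0" and "mode_det x N > 0"
proof -
  let ?q = "\<lambda>z0 z1. N (2 * x) (2 * x) * z0\<^sup>2 + 2 * N (2 * x) (2 * x + 1) * z0 * z1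
    + N (2 * x + 1) (2 * x + 1) * z1\<^sup>2"
  have q_pos: "?q z0 z1 > 0" if nz: "z0 \<noteq> 0 \<or> z1 \<noteq> 0" for z0 z1
  proof -
    define z :: "nat \<Rightarrow> real" where "z k = (if k = 0 then z0 else z1)" for k
    define c where "c p = N (rest_pos x p) (2 * x) * z0 + N (rest_pos x p) (2 * x + 1) * z1" for p
    define S where "S = (\<Sum>p<4. c p * c p)"
    define Q where "Q = bform 4 (\<lambda>p q. N (rest_pos x p) (rest_pos x q)) c c"
    obtain p0 where p0: "p0 < 4" "c p0 \<noteq> 0" using inj[OF nz] unfolding c_def by blast
    have S: "S > 0"
      unfolding S_def using p0 by (intro sum_pos2[of _ p0]) (auto simp: zero_less_mult_iff linorder_neq_iff)
    have "0 \<le> ?q z0 z1 + t * t * Q - 2 * t * S" for t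
    proof -
      have lin: "coupling x N (\<lambda>p. - t * c p) k = - t * coupling x N c k" for k
        unfolding coupling_def by (simp add: sum_distrib_left algebra_simps)
      have cS: "z0 * coupling x N c 0 + z1 * coupling x N c 1 = S"
      proof -
        have "z0 * coupling x N c 0 + z1 * coupling x N c 1
            = (\<Sum>p<4. c p * (N (rest_pos x p) (2 * x) * z0 + N (rest_pos x p) (2 * x + 1) * z1))"
          unfolding coupling_def by (simp add: sum_distrib_left sum.distrib algebra_simps)
        also have "\<dots> = S" unfolding S_def c_def by simp
        finally show ?thesis .
      qed
      have "z 0 * coupling x N (\<lambda>p. - t * c p) 0 + z 1 * coupling x N (\<lambda>p. - t * c p) 1 = - t * S"
        unfolding z_def lin cS[symmetric] by (simp add: algebra_simps)
      then show ?thesis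
        using psd[unfolded psd_r_iff_bform, rule_format, of "split_vec x z (\<lambda>p. - t * c p)"]
        unfolding bform_split_vec_diag[OF x sym] Q_def bform_scale_left bform_scale_right
        by (simp add: z_def algebra_simps)
    qed
    then show ?thesis using pos_if_quadratic_nonneg S by blast
  qed
  show P00: "N (2 * x) (2 * x) > 0" using q_pos[of 1 0] by simp
  have "0 < ?q (- N (2 * x) (2 * x + 1)) (N (2 * x) (2 * x))"
    using q_pos[of "- N (2 * x) (2 * x + 1)" "N (2 * x) (2 * x)"] P00 by simp
  then have "0 < N (2 * x) (2 * x) * mode_det x N"
    unfolding mode_det_def by (simp add: power2_eq_square algebra_simps)
  then show "mode_det x N > 0" using P00 by (simp add: zero_less_mult_iff)
qed

lemma schur_compl_ge_iK:
  assumes x: "x < 3" and sym: "rsym 6 N" and det: "mode_det x N \<noteq> 0"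
    and ge: "ge_iK 6 N (embed_bip x (\<lambda>_ _. 0) Jsym)"
  shows "ge_iK 4 (schur_compl x N) Jsym"
proof (rule ge_iK_intro)
  show "schur_compl x N j i = schur_compl x N i j" if "i < 4" "j < 4" for i j
    using schur_compl_sym[OF x sym that] .
  show "Jsym j i = - Jsym i j" for i j by (rule Jsym_antisym)
  fix X Y :: "nat \<Rightarrow> real"
  obtain zX where zX: "bform 6 N (split_vec x zX X) (split_vec x zX X) = bform 4 (schur_compl x N) X X"
    using schur_compl_attained[OF x sym det] .
  obtain zY where zY: "bform 6 N (split_vec x zY Y) (split_vec x zY Y) = bform 4 (schur_compl x N) Y Y"
    using schur_compl_attained[OF x sym det] .
  have "0 \<le> herm_form 6 N (embed_bip x (\<lambda>_ _. 0) Jsym) (split_vec x zX X) (split_vec x zY Y)"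
    by (rule ge_iK_imp_herm_form_nonneg[OF ge])
  then show "0 \<le> herm_form 4 (schur_compl x N) Jsym X Y"
    unfolding herm_form_def zX zY bform_embed_bip_rest[OF x] .
qed

lemma CM_2_schur_compl:
  assumes x: "x < 3" and sym: "rsym 6 N" and det: "mode_det x N \<noteq> 0"
    and ge: "ge_iK 6 N (embed_bip x (\<lambda>_ _. 0) Jsym)"
  shows "CM 2 (schur_compl x N)"
  using schur_compl_ge_iK[OF assms] ge_iK_Jsym_imp_pd_r[of 2 "schur_compl x N"] schur_compl_sym[OF x sym]
  unfolding CM_def rsym_def by auto

lemma embed_bip_mode_sym:
  assumes "g 1 0 = g 0 1"
  shows "embed_bip x g (\<lambda>_ _. 0) j i = embed_bip x g (\<lambda>_ _. 0) i j"
proof -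
  have "g (j mod 2) (i mod 2) = g (i mod 2) (j mod 2)"
    using assms by (cases "even i"; cases "even j") (auto simp: mod2_eq_if)
  then show ?thesis unfolding embed_bip_def by auto
qed

lemma embed_bip_Jsym_antisym: "embed_bip x (\<lambda>_ _. 0) Jsym j i = - embed_bip x (\<lambda>_ _. 0) Jsym i j"
  unfolding embed_bip_def by (simp add: Jsym_antisym[of "rest_idx x i" "rest_idx x j"])

text \<open>The two-mode CM is the Schur complement of the block of mode \<open>x\<close> in \<open>M - g1 \<oplus> 0\<close>.\<close>
lemma bisep_by_schur_compl:
  assumes x: "x < 3" and sym: "rsym 6 M" and g1: "CM 1 g1"
    and ge: "ge_iK 6 (\<lambda>i j. M i j - embed_bip x g1 (\<lambda>_ _. 0) i j) (embed_bip x (\<lambda>_ _. 0) Jsym)"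
    and inj: "\<And>z0 z1. z0 \<noteq> 0 \<or> z1 \<noteq> 0 \<Longrightarrow>
      \<exists>p<4. M (rest_pos x p) (2 * x) * z0 + M (rest_pos x p) (2 * x + 1) * z1 \<noteq> 0"
  shows "bisep x M"
proof -
  define N where "N i j = M i j - embed_bip x g1 (\<lambda>_ _. 0) i j" for i j
  have "g1 1 0 = g1 0 1" using g1 unfolding CM_def rsym_def by auto
  then have symN: "rsym 6 N"
    using sym embed_bip_mode_sym unfolding rsym_def N_def by metis
  have psdN: "psd_r 6 N"
    unfolding psd_r_iff_bform
    using ge_iK_imp_herm_form_nonneg[OF ge[folded N_def], of _ "\<lambda>_. 0"] by (simp add: herm_form_def)
  have "\<exists>p<4. N (rest_pos x p) (2 * x) * z0 + N (rest_pos x p) (2 * x + 1) * z1 \<noteq> 0"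
    if "z0 \<noteq> 0 \<or> z1 \<noteq> 0" for z0 z1
    using inj[OF that] unfolding N_def embed_bip_def by simp
  note pos = mode_block_pos[OF x symN psdN this]
  define g2 where "g2 = schur_compl x N"
  have CM2: "CM 2 g2"
    unfolding g2_def using CM_2_schur_compl[OF x symN _ ge[folded N_def]] pos(2) by simp
  have "0 \<le> bform 6 (\<lambda>i j. M i j - embed_bip x g1 g2 i j) v v" for v
  proof -
    define z where "z k = v (2 * x + k)" for k
    define w where "w p = v (rest_pos x p)" for p
    have v: "bform 6 K v v = bform 6 K (split_vec x z w) (split_vec x z w)" for K
      unfolding z_def w_def by (intro bform_cong) (simp_all add: split_vec_restrict[OF x])
    have split: "(\<lambda>i j. M i j - embed_bip x g1 g2 i j) = (\<lambda>i j. N i j - embed_bip x (\<lambda>_ _. 0) g2 i j)"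
      unfolding N_def embed_bip_def by (simp add: fun_eq_iff)
    have "bform 6 (\<lambda>i j. M i j - embed_bip x g1 g2 i j) v v
        = bform 6 N (split_vec x z w) (split_vec x z w) - bform 4 (schur_compl x N) w w"
      unfolding split unfolding bform_diff v bform_embed_bip_rest[OF x] g2_def ..
    then show ?thesis using bform_split_vec_ge_schur_compl[OF x symN pos, of w z] by simp
  qed
  then show ?thesis unfolding bisep_def psd_r_iff_bform using g1 CM2 by blast
qed

section \<open>The example\<close>

lemma aa_squared: "aa\<^sup>2 = 109 / 100"
proof -
  have "aa\<^sup>2 = 1 + cc\<^sup>2" unfolding aa_def by (simp add: add_nonneg_nonneg)
  then show ?thesis by (simp add: cc_def power2_eq_square)
qed

lemma aa_pos: "aa > 0"
  unfolding aa_def by (simp add: add_pos_nonneg)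

lemma aa_bounds: "1044 / 1000 < aa" "aa < 1045 / 1000"
proof -
  have lower: "(1044 / 1000)\<^sup>2 < aa\<^sup>2" and upper: "aa\<^sup>2 < (1045 / 1000)\<^sup>2"
    unfolding aa_squared by (simp_all add: power2_eq_square)
  show "1044 / 1000 < aa" using lower by (rule power2_less_imp_less) (use aa_pos in simp)
  show "aa < 1045 / 1000" using upper by (rule power2_less_imp_less) simp
qed

lemma rsym_gam: "rsym 6 (gam a1 a2)"
  unfolding rsym_def gam_def gam0_def by auto

lemma herm_form_gam0_sos: "herm_form 4 gam0 Jsym X Y = herm2_form aa aa 0 1
       (X 0 + 10/3 * aa * X 2 - 10/3 * Y 3)
       (10/3 * X 3 + Y 0 + 10/3 * aa * Y 2)
       (X 1 - 10/3 * aa * X 3 - 10/3 * Y 2)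
       (10/3 * X 2 + Y 1 - 10/3 * aa * Y 3)"
  unfolding herm_form_def bform_def sum_lessThan_4 gam0_def Jsym_def J1_def cc_def herm2_form_def
  by simp (use aa_squared in algebra)

text \<open>The one-mode CMs split off modes A and B. The sum-of-squares identities below show
  \<open>gam a1 a2 - YA \<oplus> 0 \<ge> i (0 \<oplus> J)\<close> once \<open>kappa a1 a2 \<ge> kappa_A\<close>, and the same for \<open>YB\<close>
  once \<open>kappa a1 a2 \<ge> 1/20\<close>.\<close>
definition YA :: rmat where
  "YA i j = (if i = 0 \<and> j = 0 then (207 + 860 * aa) / 791 else if i = 1 \<and> j = 1 then (-153
          + 740 * aa) / 791
      else if i + j = 1 then (-180 - 60 * aa) / 791 else 0)"

definition YB :: rmat where
  "YB i j = (if i = 0 \<and> j = 0 then (153 + 740 * aa) / 791 else if i = 1 \<and> j = 1 then (-207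
          + 860 * aa) / 791
      else if i + j = 1 then (180 - 60 * aa) / 791 else 0)"

text \<open>Real and imaginary part of \<open>l (X + i Y)\<close> for the linear form
  \<open>l v = (2 - i) (v\<^sub>0 - v\<^sub>2) - (v\<^sub>1 + v\<^sub>3)\<close>.\<close>
definition ell_re :: "(nat \<Rightarrow> real) \<Rightarrow> (nat \<Rightarrow> real) \<Rightarrow> real" where
  "ell_re X Y = 2 * X 0 - 2 * X 2 - X 1 - X 3 + Y 0 - Y 2"

definition ell_im :: "(nat \<Rightarrow> real) \<Rightarrow> (nat \<Rightarrow> real) \<Rightarrow> real" where
  "ell_im X Y = 2 * Y 0 - 2 * Y 2 - Y 1 - Y 3 - X 0 + X 2"

definition kappa_A :: real where
  "kappa_A = 81 / 1240 + 3 / 124 * aa"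

lemma herm_form_YA_sos:
  "herm_form 4 (\<lambda>i j. gam0 i j - embed_bip 0 YA (\<lambda>_ _. 0) i j) (embed_bip 0 (\<lambda>_ _. 0) Jsym) X Y
     + kappa_A * ((ell_re X Y)\<^sup>2 + (ell_im X Y)\<^sup>2)
   = herm2_form (81/248 + 139/124 * aa) (81/1240 + 127/124 * aa) (81/620 + 3/62 * aa) (1321/1240 + 3/124 * aa)
       ((101/1582 - 115/791 * aa) * X 0 + (300/791 + 100/791 * aa) * X 1 + X 2 + (-19/791 - 270/791 * aa) * Y 0
               + (205/1582 - 625/791 * aa) * Y 1)
       ((19/791 + 270/791 * aa) * X 0 + (-205/1582 + 625/791 * aa) * X 1 + (101/1582 - 115/791 * aa) * Y 0
               + (300/791 + 100/791 * aa) * Y 1 + Y 2)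
       ((-300/791 - 100/791 * aa) * X 0 + (-1301/1582 - 85/791 * aa) * X 1 + X 3 + (281/1582 - 85/791 * aa) * Y 0
               + (-19/791 - 270/791 * aa) * Y 1)
       ((-281/1582 + 85/791 * aa) * X 0 + (19/791 + 270/791 * aa) * X 1 + (-300/791 - 100/791 * aa) * Y 0
               + (-1301/1582 - 85/791 * aa) * Y 1 + Y 3)"
  unfolding herm_form_def bform_def sum_lessThan_4 embed_bip_def rest_idx_def gam0_def YA_def Jsym_def J1_def
    cc_def herm2_form_def ell_re_def ell_im_def kappa_A_def
  by simp (use aa_squared in algebra)

lemma herm_form_YB_sos:
  "herm_form 4 (\<lambda>i j. gam0 i j - embed_bip 1 YB (\<lambda>_ _. 0) i j) (embed_bip 1 (\<lambda>_ _. 0) Jsym) X Y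
     + 1 / 20 * ((ell_re X Y)\<^sup>2 + (ell_im X Y)\<^sup>2)
   = herm2_form (1/4 + aa) (1/20 + aa) (-1/10) (19/20)
       (X 0 + (23/62 - 10/31 * aa) * X 2 + (-27/62 + 5/31 * aa) * X 3 + (-19/62 + 15/31 * aa) * Y 2
               + (61/62 - 40/31 * aa) * Y 3)
       ((19/62 - 15/31 * aa) * X 2 + (-61/62 + 40/31 * aa) * X 3 + Y 0 + (23/62 - 10/31 * aa) * Y 2
               + (-27/62 + 5/31 * aa) * Y 3)
       (X 1 + (27/62 - 5/31 * aa) * X 2 + (-77/62 + 20/31 * aa) * X 3 + (23/62 - 10/31 * aa) * Y 2
               + (-19/62 + 15/31 * aa) * Y 3)
       ((-23/62 + 10/31 * aa) * X 2 + (19/62 - 15/31 * aa) * X 3 + Y 1 + (27/62 - 5/31 * aa) * Y 2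
               + (-77/62 + 20/31 * aa) * Y 3)
     + herm2_form (-2361/98084 + 5535/49042 * aa) (-44889/490420 + 7587/49042 * aa)
         (8271/245210 - 513/24521 * aa) (81/620 - 3/62 * aa) (X 2) (Y 2) (X 3) (Y 3)"
proof -
  have "herm_form 4 (\<lambda>i j. gam0 i j - embed_bip 1 YB (\<lambda>_ _. 0) i j) (embed_bip 1 (\<lambda>_ _. 0) Jsym) X Y
      + 1 / 20 * ((ell_re X Y)\<^sup>2 + (ell_im X Y)\<^sup>2)
    = (1/4 + aa) * X 0 * X 0 - 1/5 * X 0 * X 1 + 1/10 * X 0 * X 2 - 1/5 * X 0 * X 3 - 19/10 * X 0 * Y 1
      + 1/10 * X 0 * Y 3 + (1/20 + aa) * X 1 * X 1 + 1/5 * X 1 * X 2 - 1/2 * X 1 * X 3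
      + 19/10 * X 1 * Y 0 + 1/10 * X 1 * Y 2 + (179/3164 + 51/791 * aa) * X 2 * X 2
      + (-1009/3955 + 120/791 * aa) * X 2 * X 3 - 1/10 * X 2 * Y 1 - 1/10 * X 2 * Y 3
      + (4931/15820 - 69/791 * aa) * X 3 * X 3 - 1/10 * X 3 * Y 0 + 1/10 * X 3 * Y 2
      + (1/4 + aa) * Y 0 * Y 0 - 1/5 * Y 0 * Y 1 + 1/10 * Y 0 * Y 2 - 1/5 * Y 0 * Y 3
      + (1/20 + aa) * Y 1 * Y 1 + 1/5 * Y 1 * Y 2 - 1/2 * Y 1 * Y 3
      + (179/3164 + 51/791 * aa) * Y 2 * Y 2 + (-1009/3955 + 120/791 * aa) * Y 2 * Y 3
      + (4931/15820 - 69/791 * aa) * Y 3 * Y 3"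
    unfolding herm_form_def bform_def sum_lessThan_4 embed_bip_def rest_idx_def gam0_def YB_def Jsym_def J1_def
      cc_def ell_re_def ell_im_def
    by (simp add: power2_eq_square) (simp add: field_simps)
  \<comment> \<open>With the explicit cofactor of \<open>aa\<^sup>2 - 109/100\<close> this step is a plain ring identity.\<close>
  also have "\<dots> = herm2_form (1/4 + aa) (1/20 + aa) (-1/10) (19/20)
       (X 0 + (23/62 - 10/31 * aa) * X 2 + (-27/62 + 5/31 * aa) * X 3 + (-19/62 + 15/31 * aa) * Y 2
               + (61/62 - 40/31 * aa) * Y 3)
       ((19/62 - 15/31 * aa) * X 2 + (-61/62 + 40/31 * aa) * X 3 + Y 0 + (23/62 - 10/31 * aa) * Y 2
               + (-27/62 + 5/31 * aa) * Y 3)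
       (X 1 + (27/62 - 5/31 * aa) * X 2 + (-77/62 + 20/31 * aa) * X 3 + (23/62 - 10/31 * aa) * Y 2
               + (-19/62 + 15/31 * aa) * Y 3)
       ((-23/62 + 10/31 * aa) * X 2 + (19/62 - 15/31 * aa) * X 3 + Y 1 + (27/62 - 5/31 * aa) * Y 2
               + (-77/62 + 20/31 * aa) * Y 3)
     + herm2_form (-2361/98084 + 5535/49042 * aa) (-44889/490420 + 7587/49042 * aa)
         (8271/245210 - 513/24521 * aa) (81/620 - 3/62 * aa) (X 2) (Y 2) (X 3) (Y 3)
     + (aa\<^sup>2 - 109 / 100) * ((20/31 * X 0 * X 2 - 10/31 * X 0 * X 3 - 30/31 * X 0 * Y 2
             + 80/31 * X 0 * Y 3 + 10/31 * X 1 * X 2 - 40/31 * X 1 * X 3 + 20/31 * X 1 * Y 2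
             - 30/31 * X 1 * Y 3 + 440/961 * X 2 * X 2 - 1760/961 * X 2 * X 3 + 30/31 * X 2 * Y 0
             - 20/31 * X 2 * Y 1 + 880/961 * X 2 * Y 3 + 2200/961 * X 3 * X 3 - 80/31 * X 3 * Y 0
             + 30/31 * X 3 * Y 1 - 880/961 * X 3 * Y 2 + 20/31 * Y 0 * Y 2 - 10/31 * Y 0 * Y 3
             + 10/31 * Y 1 * Y 2 - 40/31 * Y 1 * Y 3 + 440/961 * Y 2 * Y 2 - 1760/961 * Y 2 * Y 3
             + 2200/961 * Y 3 * Y 3) + aa * (-450/961 * X 2 * X 2 + 1800/961 * X 2 * X 3 - 900/961 * X 2 * Y 3
             - 2250/961 * X 3 * X 3 + 900/961 * X 3 * Y 2 - 450/961 * Y 2 * Y 2 + 1800/961 * Y 2 * Y 3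
             - 2250/961 * Y 3 * Y 3))"
    unfolding herm2_form_def by algebra
  finally show ?thesis using aa_squared by simp
qed

text \<open>The contribution of mode C and of the two rank-one terms to the Hermitian forms of
  \<open>gam a1 a2\<close> considered below.\<close>
definition perturb_form :: "real \<Rightarrow> real \<Rightarrow> (nat \<Rightarrow> real) \<Rightarrow> (nat \<Rightarrow> real) \<Rightarrow> real" where
  "perturb_form a1 a2 X Y = (X 4 - Y 5)\<^sup>2 + (Y 4 + X 5)\<^sup>2
     + a1 * ((X 1 + X 3 + X 4 + 2 * X 5)\<^sup>2 + (Y 1 + Y 3 + Y 4 + 2 * Y 5)\<^sup>2)
     + a2 * ((X 0 - X 2 + X 5)\<^sup>2 + (Y 0 - Y 2 + Y 5)\<^sup>2)"

lemma herm_form_gam_sub_mode: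
  assumes "x < 2"
  shows "herm_form 6 (\<lambda>i j. gam a1 a2 i j - embed_bip x g (\<lambda>_ _. 0) i j) (embed_bip x (\<lambda>_ _. 0) Jsym) X Y
    = herm_form 4 (\<lambda>i j. gam0 i j - embed_bip x g (\<lambda>_ _. 0) i j) (embed_bip x (\<lambda>_ _. 0) Jsym) X Y
      + perturb_form a1 a2 X Y"
proof -
  have "x = 0 \<or> x = 1" using assms by auto
  then show ?thesis
    by (elim disjE; simp add: herm_form_def bform_def sum_lessThan_4 sum_lessThan_6 embed_bip_def rest_idx_def
        gam_def gam0_def pt1_def pt2_def Jsym_def J1_def perturb_form_def power2_eq_square)
      (simp_all add: algebra_simps)
qed

lemma herm_form_gam_Jtilde_A:
  "herm_form 6 (gam a1 a2) (Jtilde 0) X Y = herm_form 4 gam0 (Jtilde 0) X Y + perturb_form a1 a2 X Y"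
  by (simp add: herm_form_def bform_def sum_lessThan_4 sum_lessThan_6 Jtilde_def gam_def gam0_def pt1_def pt2_def
      Jsym_def J1_def perturb_form_def power2_eq_square)
    (simp add: algebra_simps)

text \<open>Minimising \<open>perturb_form\<close> over the coordinates of mode C leaves \<open>kappa a1 a2\<close> times
  the squared modulus of the linear form \<open>(ell_re + i ell_im)\<close>.\<close>
definition kappa :: "real \<Rightarrow> real \<Rightarrow> real" where
  "kappa a1 a2 = a1 * a2 / (a1 * a2 + a2 + 5 * a1)"

lemma kappa_le_perturb_form:
  assumes a1: "a1 > 0" and a2: "a2 > 0"
  shows "kappa a1 a2 * ((ell_re X Y)\<^sup>2 + (ell_im X Y)\<^sup>2) \<le> perturb_form a1 a2 X Y"
proof -
  define D where "D = a1 * a2 + a2 + 5 * a1"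
  have D: "D > 0" unfolding D_def using a1 a2 by (simp add: add_pos_pos)
  define z0r where "z0r = X 4 - Y 5"
  define z0i where "z0i = Y 4 + X 5"
  define z1r where "z1r = X 1 + X 3 + X 4 + 2 * X 5"
  define z1i where "z1i = Y 1 + Y 3 + Y 4 + 2 * Y 5"
  define z2r where "z2r = X 0 - X 2 + X 5"
  define z2i where "z2i = Y 0 - Y 2 + Y 5"
  have "D * perturb_form a1 a2 X Y - a1 * a2 * ((ell_re X Y)\<^sup>2 + (ell_im X Y)\<^sup>2)
     = a2 * ((z0r + a1 * z1r)\<^sup>2 + (z0i + a1 * z1i)\<^sup>2)
       + a1 * ((2 * z0r - z0i - a2 * z2r)\<^sup>2 + (z0r + 2 * z0i - a2 * z2i)\<^sup>2)
       + ((a1 * (2 * z1r - z1i) + a2 * z2r)\<^sup>2 + (a1 * (z1r + 2 * z1i) + a2 * z2i)\<^sup>2)"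
    unfolding D_def perturb_form_def ell_re_def ell_im_def z0r_def z0i_def z1r_def z1i_def z2r_def z2i_def
    by algebra
  also have "\<dots> \<ge> 0" using a1 a2 by simp
  finally have "a1 * a2 * ((ell_re X Y)\<^sup>2 + (ell_im X Y)\<^sup>2) \<le> D * perturb_form a1 a2 X Y" by simp
  then show ?thesis unfolding kappa_def D_def[symmetric] using D by (simp add: field_simps)
qed

lemma perturb_form_attains_kappa:
  assumes a1: "a1 \<ge> 0" and a2: "a2 \<ge> 0"
  obtains X' Y' where "\<And>i. i < 4 \<Longrightarrow> X' i = X i" "\<And>i. i < 4 \<Longrightarrow> Y' i = Y i"
    and "perturb_form a1 a2 X' Y' = kappa a1 a2 * ((ell_re X Y)\<^sup>2 + (ell_im X Y)\<^sup>2)"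
proof -
  define br where "br = ell_re X Y"
  define bi where "bi = ell_im X Y"
  define D where "D = a1 * a2 + a2 + 5 * a1"
  define s0r where "s0r = a1 * a2 * br / D"
  define s0i where "s0i = a1 * a2 * bi / D"
  define s2r where "s2r = a1 * (2 * br - bi) / D"
  define s2i where "s2i = a1 * (br + 2 * bi) / D"
  define X' where "X' = X(4 := s0r + s2i - (Y 0 - Y 2), 5 := s2r - (X 0 - X 2))"
  define Y' where "Y' = Y(4 := s0i - s2r + (X 0 - X 2), 5 := s2i - (Y 0 - Y 2))"
  have C: "perturb_form a1 a2 X' Y' = s0r\<^sup>2 + s0i\<^sup>2
      + a1 * ((s0r + 2 * s2r + s2i - br)\<^sup>2 + (s0i + 2 * s2i - s2r - bi)\<^sup>2) + a2 * (s2r\<^sup>2 + s2i\<^sup>2)"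
    unfolding perturb_form_def X'_def Y'_def br_def bi_def ell_re_def ell_im_def
    by (simp add: algebra_simps)
  have "perturb_form a1 a2 X' Y' = kappa a1 a2 * (br\<^sup>2 + bi\<^sup>2)"
  proof (cases "D = 0")
    case True
    then have "a1 = 0" "a2 = 0" using a1 a2 unfolding D_def by (auto simp: add_nonneg_eq_0_iff)
    then show ?thesis unfolding C s0r_def s0i_def s2r_def s2i_def kappa_def by simp
  next
    case False
    have e1: "s0r + 2 * s2r + s2i - br = - a2 * br / D"
      unfolding s0r_def s2r_def s2i_def using False by (simp add: field_simps) (simp add: D_def algebra_simps)
    have e2: "s0i + 2 * s2i - s2r - bi = - a2 * bi / D"
      unfolding s0i_def s2r_def s2i_def using False by (simp add: field_simps) (simp add: D_def algebra_simps)
    show ?thesis unfolding C e1 e2 unfolding s0r_def s0i_def s2r_def s2i_def kappa_def D_def[symmetric]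
      using False by (simp add: field_simps power2_eq_square) (simp add: D_def algebra_simps)
  qed
  then show ?thesis using that[of X' Y'] unfolding X'_def Y'_def br_def bi_def by simp
qed

lemma ge_iK_gam_sub_mode:
  assumes x: "x < 2" and g: "g 1 0 = g 0 1" and a1: "a1 > 0" and a2: "a2 > 0" and k: "k \<le> kappa a1 a2"
    and sos: "\<And>X Y. 0 \<le> herm_form 4 (\<lambda>i j. gam0 i j - embed_bip x g (\<lambda>_ _. 0) i j) (embed_bip x (\<lambda>_ _. 0) Jsym) X Y
      + k * ((ell_re X Y)\<^sup>2 + (ell_im X Y)\<^sup>2)"
  shows "ge_iK 6 (\<lambda>i j. gam a1 a2 i j - embed_bip x g (\<lambda>_ _. 0) i j) (embed_bip x (\<lambda>_ _. 0) Jsym)"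
proof (rule ge_iK_intro)
  show "gam a1 a2 j i - embed_bip x g (\<lambda>_ _. 0) j i = gam a1 a2 i j - embed_bip x g (\<lambda>_ _. 0) i j"
    if "i < 6" "j < 6" for i j
    using rsym_gam embed_bip_mode_sym[OF g] that unfolding rsym_def by metis
  show "embed_bip x (\<lambda>_ _. 0) Jsym j i = - embed_bip x (\<lambda>_ _. 0) Jsym i j" for i j
    by (rule embed_bip_Jsym_antisym)
  fix X Y :: "nat \<Rightarrow> real"
  have "k * ((ell_re X Y)\<^sup>2 + (ell_im X Y)\<^sup>2) \<le> kappa a1 a2 * ((ell_re X Y)\<^sup>2 + (ell_im X Y)\<^sup>2)"
    using k by (simp add: mult_right_mono)
  also have "\<dots> \<le> perturb_form a1 a2 X Y" by (rule kappa_le_perturb_form[OF a1 a2])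
  finally show "0 \<le> herm_form 6 (\<lambda>i j. gam a1 a2 i j - embed_bip x g (\<lambda>_ _. 0) i j) (embed_bip x (\<lambda>_ _. 0) Jsym) X Y"
    unfolding herm_form_gam_sub_mode[OF x] using sos[of X Y] by linarith
qed

lemma gam_coupling_inj:
  assumes x: "x < 2" and a1: "a1 > 0" and a2: "a2 > 0" and z: "z0 \<noteq> 0 \<or> z1 \<noteq> 0"
  shows "\<exists>p<4. gam a1 a2 (rest_pos x p) (2 * x) * z0 + gam a1 a2 (rest_pos x p) (2 * x + 1) * z1 \<noteq> 0"
proof -
  have "x = 0 \<or> x = 1" using x by auto
  then have "gam a1 a2 (rest_pos x 3) (2 * x) * z0 + gam a1 a2 (rest_pos x 3) (2 * x + 1) * z1 \<noteq> 0 \<or>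
      gam a1 a2 (rest_pos x 2) (2 * x) * z0 + gam a1 a2 (rest_pos x 2) (2 * x + 1) * z1 \<noteq> 0"
    using a1 a2 z by (elim disjE) (auto simp: rest_pos_def gam_def gam0_def pt1_def pt2_def)
  then show ?thesis
    by (elim disjE) (rule exI[where x = 3], simp, rule exI[where x = 2], simp)
qed

lemma CM_1_YA: "CM 1 YA"
proof (rule CM_1_intro)
  have "(207 + 860 * aa) * (-153 + 740 * aa) - (-180 - 60 * aa)\<^sup>2 = 625681"
    using aa_squared by algebra
  then show "YA 0 0 * YA 1 1 - (YA 0 1)\<^sup>2 \<ge> 1"
    unfolding YA_def by (simp add: power_divide field_simps)
qed (use aa_pos in \<open>simp_all add: YA_def\<close>)

lemma CM_1_YB: "CM 1 YB"
proof (rule CM_1_intro)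
  have "(153 + 740 * aa) * (-207 + 860 * aa) - (180 - 60 * aa)\<^sup>2 = 625681"
    using aa_squared by algebra
  then show "YB 0 0 * YB 1 1 - (YB 0 1)\<^sup>2 \<ge> 1"
    unfolding YB_def by (simp add: power_divide field_simps)
qed (use aa_pos in \<open>simp_all add: YB_def\<close>)

lemma bisep_A:
  assumes a1: "a1 > 0" and a2: "a2 > 0" and k: "kappa_A \<le> kappa a1 a2"
  shows "bisep 0 (gam a1 a2)"
proof (rule bisep_by_schur_compl[OF _ rsym_gam CM_1_YA ge_iK_gam_sub_mode[OF _ _ a1 a2 k]])
  show "0 \<le> herm_form 4 (\<lambda>i j. gam0 i j - embed_bip 0 YA (\<lambda>_ _. 0) i j) (embed_bip 0 (\<lambda>_ _. 0) Jsym) X Y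
      + kappa_A * ((ell_re X Y)\<^sup>2 + (ell_im X Y)\<^sup>2)" for X Y
    unfolding herm_form_YA_sos
  proof (rule herm2_form_nonneg)
    have "(81/248 + 139/124 * aa) * (81/1240 + 127/124 * aa) - (81/620 + 3/62 * aa)\<^sup>2 - (1321/1240 + 3/124 * aa)\<^sup>2
        = 729/6200 + 213/620 * aa" using aa_squared by algebra
    then show "0 \<le> (81/248 + 139/124 * aa) * (81/1240 + 127/124 * aa) - (81/620 + 3/62 * aa)\<^sup>2
        - (1321/1240 + 3/124 * aa)\<^sup>2"
      using aa_pos by simp
  qed (use aa_pos in simp)
  show "\<exists>p<4. gam a1 a2 (rest_pos 0 p) (2 * 0) * z0 + gam a1 a2 (rest_pos 0 p) (2 * 0 + 1) * z1 \<noteq> 0"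
    if "z0 \<noteq> 0 \<or> z1 \<noteq> 0" for z0 z1
    using gam_coupling_inj[OF _ a1 a2 that, of 0] by simp
qed (simp_all add: YA_def)

lemma bisep_B:
  assumes a1: "a1 > 0" and a2: "a2 > 0" and k: "1 / 20 \<le> kappa a1 a2"
  shows "bisep 1 (gam a1 a2)"
proof (rule bisep_by_schur_compl[OF _ rsym_gam CM_1_YB ge_iK_gam_sub_mode[OF _ _ a1 a2 k]])
  show "0 \<le> herm_form 4 (\<lambda>i j. gam0 i j - embed_bip 1 YB (\<lambda>_ _. 0) i j) (embed_bip 1 (\<lambda>_ _. 0) Jsym) X Y
      + 1 / 20 * ((ell_re X Y)\<^sup>2 + (ell_im X Y)\<^sup>2)" for X Y
    unfolding herm_form_YB_sos
  proof (intro add_nonneg_nonneg herm2_form_nonneg)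
    have "(1/4 + aa) * (1/20 + aa) - (-1/10)\<^sup>2 - (19/20)\<^sup>2 = 19/100 + 3/10 * aa"
      using aa_squared by algebra
    then show "0 \<le> (1/4 + aa) * (1/20 + aa) - (-1/10)\<^sup>2 - (19/20)\<^sup>2" using aa_pos by simp
    have "(-2361/98084 + 5535/49042 * aa) * (-44889/490420 + 7587/49042 * aa)
        - (8271/245210 - 513/24521 * aa)\<^sup>2 - (81/620 - 3/62 * aa)\<^sup>2 = 0"
      using aa_squared by algebra
    then show "0 \<le> (-2361/98084 + 5535/49042 * aa) * (-44889/490420 + 7587/49042 * aa)
        - (8271/245210 - 513/24521 * aa)\<^sup>2 - (81/620 - 3/62 * aa)\<^sup>2" by simp
  qed (use aa_pos aa_bounds in simp_all)
  show "\<exists>p<4. gam a1 a2 (rest_pos 1 p) (2 * 1) * z0 + gam a1 a2 (rest_pos 1 p) (2 * 1 + 1) * z1 \<noteq> 0"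
    if "z0 \<noteq> 0 \<or> z1 \<noteq> 0" for z0 z1
    using gam_coupling_inj[OF _ a1 a2 that, of 1] by simp
qed (simp_all add: YB_def)

lemma CM_2_gam0: "CM 2 gam0"
proof -
  have sym: "gam0 j i = gam0 i j" for i j unfolding gam0_def by auto
  have "ge_iK 4 gam0 Jsym"
  proof (rule ge_iK_intro)
    show "0 \<le> herm_form 4 gam0 Jsym X Y" for X Y
      unfolding herm_form_gam0_sos
      using aa_pos aa_squared by (intro herm2_form_nonneg) (simp_all add: power2_eq_square)
    show "gam0 j i = gam0 i j" for i j by (rule sym)
    show "Jsym j i = - Jsym i j" for i j by (rule Jsym_antisym)
  qed
  then show ?thesis using ge_iK_Jsym_imp_pd_r[of 2 gam0] sym unfolding CM_def rsym_def by simp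
qed

lemma bisep_C:
  assumes a1: "a1 \<ge> 0" and a2: "a2 \<ge> 0"
  shows "bisep 2 (gam a1 a2)"
  unfolding bisep_def
proof (intro exI conjI)
  show "CM 1 (\<lambda>i j. if i = j then 1 else 0)" by (rule CM_1_intro) simp_all
  show "CM 2 gam0" by (rule CM_2_gam0)
  have "bform 6 (\<lambda>i j. gam a1 a2 i j - embed_bip 2 (\<lambda>i j. if i = j then 1 else 0) gam0 i j) v v
      = a1 * (v 1 + v 3 + v 4 + 2 * v 5)\<^sup>2 + a2 * (v 0 - v 2 + v 5)\<^sup>2" for v
    by (simp add: bform_def sum_lessThan_6 gam_def gam0_def pt1_def pt2_def embed_bip_def rest_idx_def
        power2_eq_square) (simp add: algebra_simps)
  then show "psd_r 6 (\<lambda>i j. gam a1 a2 i j - embed_bip 2 (\<lambda>i j. if i = j then 1 else 0) gam0 i j)"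
    unfolding psd_r_iff_bform using a1 a2 by simp
qed

lemma kappa_A_le_kappa_if_ppt_A:
  assumes a1: "a1 \<ge> 0" and a2: "a2 \<ge> 0" and ppt: "ge_iK 6 (gam a1 a2) (Jtilde 0)"
  shows "kappa_A \<le> kappa a1 a2"
proof -
  define X where "X = (!) [24 + 180 * aa, 965, - (24 + 180 * aa), 965]"
  define Y where "Y = (!) [-207 + 860 * aa, 0, 207 - 860 * aa, 0]"
  define L where "L = (ell_re X Y)\<^sup>2 + (ell_im X Y)\<^sup>2"
  have "ell_re X Y = -2248 + 2440 * aa" "ell_im X Y = -876 + 3080 * aa"
    unfolding ell_re_def ell_im_def X_def Y_def by simp_all
  then have L: "L = 22650480 - 16366400 * aa"
    unfolding L_def using aa_squared by algebra
  have "herm_form 4 gam0 (Jtilde 0) X Y = -1047990 + 521100 * aa"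
    unfolding herm_form_def bform_def sum_lessThan_4
    by (simp add: X_def Y_def Jtilde_def gam0_def Jsym_def J1_def cc_def) (use aa_squared in algebra)
  also have "\<dots> = - kappa_A * L"
    unfolding L kappa_A_def using aa_squared by algebra
  finally have R: "herm_form 4 gam0 (Jtilde 0) X Y = - kappa_A * L" .
  obtain X' Y' where X': "\<And>i. i < 4 \<Longrightarrow> X' i = X i" and Y': "\<And>i. i < 4 \<Longrightarrow> Y' i = Y i"
    and P: "perturb_form a1 a2 X' Y' = kappa a1 a2 * L"
    using perturb_form_attains_kappa[OF a1 a2] unfolding L_def by blast
  have "0 \<le> herm_form 6 (gam a1 a2) (Jtilde 0) X' Y'"
    by (rule ge_iK_imp_herm_form_nonneg[OF ppt])
  also have "\<dots> = herm_form 4 gam0 (Jtilde 0) X Y + kappa a1 a2 * L"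
    unfolding herm_form_gam_Jtilde_A P using herm_form_cong[of 4 X' X Y' Y] X' Y' by simp
  finally have "kappa_A * L \<le> kappa a1 a2 * L" unfolding R by simp
  moreover have "L > 0" unfolding L using aa_bounds by simp
  ultimately show ?thesis by simp
qed

text \<open>A witness for entanglement: the four test vectors are orthogonal to \<open>pt1\<close> and \<open>pt2\<close>,
  so their weighted Gram sum with \<open>gam a1 a2\<close> does not depend on \<open>a1, a2\<close>; testing
  \<open>gam a1 a2 \<ge> g_A \<oplus> g_B \<oplus> g_C\<close> on them yields \<open>373/200 + 207/40 aa \<ge> \<Sum>\<^sub>m tr (P\<^sub>m g\<^sub>m)\<close>,
  while every one-mode CM satisfies \<open>tr (P\<^sub>m g\<^sub>m) \<ge> 2 \<surd>det P\<^sub>m\<close>.\<close>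
lemma not_fully_sep_gam: "\<not> fully_sep (gam a1 a2)"
proof
  assume "fully_sep (gam a1 a2)"
  then obtain gs where cm: "\<And>m. m < 3 \<Longrightarrow> CM 1 (gs m)"
    and psd: "psd_r 6 (\<lambda>i j. gam a1 a2 i j - (if i div 2 = j div 2 then gs (i div 2) (i mod 2) (j mod 2) else 0))"
    unfolding fully_sep_def by blast
  define D where "D i j = gam a1 a2 i j - (if i div 2 = j div 2 then gs (i div 2) (i mod 2) (j mod 2) else 0)" for i j
  have sym: "gs m 1 0 = gs m 0 1" if "m < 3" for m using cm[OF that] unfolding CM_def rsym_def by auto
  define v1 :: "nat \<Rightarrow> real" where "v1 = (!) [9/20, -17/20, 1, -1/4, 0, 11/20]"
  define v2 :: "nat \<Rightarrow> real" where "v2 = (!) [273/331, 1, 0, 435/331, -220/331, -273/331]"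
  define v3 :: "nat \<Rightarrow> real" where "v3 = (!) [765/386, 0, 0, 1, 572/193, -765/386]"
  define v4 :: "nat \<Rightarrow> real" where "v4 = (!) [1/2, 0, 0, 0, 1, -1/2]"
  have "0 \<le> bform 6 D v1 v1 + 331/400 * bform 6 D v2 v2 + 193/3310 * bform 6 D v3 v3 + 311/965 * bform 6 D v4 v4"
    using psd unfolding psd_r_iff_bform D_def[symmetric] by (simp add: add_nonneg_nonneg)
  also have "\<dots> = 373/200 + 207/40 * aa
      - ((43/40 * gs 0 0 0 + 2 * (3/10) * gs 0 0 1 + 31/20 * gs 0 1 1)
        + (1 * gs 1 0 0 + 2 * (-1/4) * gs 1 0 1 + 31/20 * gs 1 1 1)
        + (6/5 * gs 2 0 0 + 2 * (-1/20) * gs 2 0 1 + 47/40 * gs 2 1 1))"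
    using sym[of 0] sym[of 1] sym[of 2]
    unfolding bform_def sum_lessThan_6 D_def v1_def v2_def v3_def v4_def gam_def gam0_def pt1_def pt2_def cc_def
    by (simp add: field_simps)
  also have "\<dots> < 0"
  proof -
    have "2 * (251/200) \<le> 43/40 * gs 0 0 0 + 2 * (3/10) * gs 0 0 1 + 31/20 * gs 0 1 1"
      by (rule CM_1_trace_ge[OF cm]) (simp_all add: power2_eq_square)
    moreover have "2 * (1219/1000) \<le> 1 * gs 1 0 0 + 2 * (-1/4) * gs 1 0 1 + 31/20 * gs 1 1 1"
      by (rule CM_1_trace_ge[OF cm]) (simp_all add: power2_eq_square)
    moreover have "2 * (593/500) \<le> 6/5 * gs 2 0 0 + 2 * (-1/20) * gs 2 0 1 + 47/40 * gs 2 1 1"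
      by (rule CM_1_trace_ge[OF cm]) (simp_all add: power2_eq_square)
    ultimately show ?thesis using aa_bounds(2) by linarith
  qed
  finally show False by simp
qed

lemma pos_if_kappa_A_le_kappa:
  assumes k: "kappa_A \<le> kappa a1 a2" and a1: "0 \<le> a1" and a2: "0 \<le> a2"
  shows "0 < a1" "0 < a2"
proof -
  have "kappa_A > 0" unfolding kappa_A_def using aa_pos by simp
  then have "a1 \<noteq> 0" "a2 \<noteq> 0" using k unfolding kappa_def by auto
  then show "0 < a1" "0 < a2" using a1 a2 by simp_all
qed

lemma bisep_gam:
  assumes a1: "0 < a1" and a2: "0 < a2" and k: "kappa_A \<le> kappa a1 a2" and x: "x < 3"
  shows "bisep x (gam a1 a2)"
proof -
  have "1 / 20 \<le> kappa a1 a2" using k aa_pos unfolding kappa_A_def by simp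
  moreover have "x = 0 \<or> x = 1 \<or> x = 2" using x by auto
  ultimately show ?thesis using bisep_A[OF a1 a2 k] bisep_B[OF a1 a2] bisep_C a1 a2 by auto
qed

lemma CM_3_gam:
  assumes "ge_iK 6 (gam a1 a2) Jsym"
  shows "CM 3 (gam a1 a2)"
  using assms rsym_gam ge_iK_Jsym_imp_pd_r[of 3 "gam a1 a2"] unfolding CM_def by simp

theorem mainTheorem14:
  fixes a1 a2 :: real
  assumes "0 \<le> a1" and "0 \<le> a2"
  shows "\<not> fully_sep (gam a1 a2) \<and>
         ((ge_iK 6 (gam a1 a2) Jsym \<and> (\<forall>x<3. ge_iK 6 (gam a1 a2) (Jtilde x)))
            \<longrightarrow> class4 (gam a1 a2))"
proof (intro conjI impI)
  show not_fs: "\<not> fully_sep (gam a1 a2)" by (rule not_fully_sep_gam)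
  assume H: "ge_iK 6 (gam a1 a2) Jsym \<and> (\<forall>x<3. ge_iK 6 (gam a1 a2) (Jtilde x))"
  then have k: "kappa_A \<le> kappa a1 a2" using kappa_A_le_kappa_if_ppt_A assms by simp
  note pos = pos_if_kappa_A_le_kappa[OF k assms]
  show "class4 (gam a1 a2)"
    unfolding class4_def using CM_3_gam H bisep_gam[OF pos k] not_fs by blast
qed

end
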